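(* Let $a,b\in\mathbb{N}$ with $b\le a$. Then there exist $n,k\in\mathbb{N}$ with $k\le n$ such that for every 2-coloring of the edges of $B_{n,k}$, there exists an induced monochromatic copy of $B_{a,b}$ in $B_{n,k}$; that is, there is a set $V'$ of vertices of $B_{n,k}$ such that the induced subgraph of $B_{n,k}$ on $V'$ is isomorphic to $B_{a,b}$ and all of its edges receive the same color.
   Context: For $n\in\mathbb{N}$, $[n]=\{1,\dots,n\}$, and for a set $X$, $\binom{X}{k}$ denotes the set of $k$-element subsets of $X$. For $k\le n$, $B_{n,k}$ is the bipartite graph with left vertex set $[n]$, right vertex set $\binom{[n]}{k}$, and edge set $\{(x,X)\in[n]\times\binom{[n]}{k} : x\in X\}$. For a graph $H=(V,E)$ and $V'\subseteq V$, the induced subgraph on $V'$ has vertex set $V'$ and edge set consisting of all edges of $H$ with both endpoints in $V'$. A 2-coloring of the edges is a map from the edge set to a 2-element set of colors. *)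

theory Defs
  imports Main
begin

type_synonym bvert = "nat + nat set"

definition ksubsets :: "nat \<Rightarrow> nat \<Rightarrow> nat set set" where
  "ksubsets n k = {X. X \<subseteq> {1..n} \<and> card X = k}"

definition B_verts :: "nat \<Rightarrow> nat \<Rightarrow> bvert set" where
  "B_verts n k = Inl ` {1..n} \<union> Inr ` ksubsets n k"

definition B_edges :: "nat \<Rightarrow> nat \<Rightarrow> bvert set set" where
  "B_edges n k = {{Inl x, Inr X} | x X. x \<in> {1..n} \<and> X \<in> ksubsets n k \<and> x \<in> X}"

definition induced_iso :: "nat \<Rightarrow> nat \<Rightarrow> bvert set \<Rightarrow> nat \<Rightarrow> nat \<Rightarrow> bool" where
  "induced_iso n k V' a b \<longleftrightarrow> V' \<subseteq> B_verts n k \<and>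
     (\<exists>f. bij_betw f V' (B_verts a b) \<and>
          (\<forall>u\<in>V'. \<forall>v\<in>V'. {u, v} \<in> B_edges n k \<longleftrightarrow> {f u, f v} \<in> B_edges a b))"

end

(*
  Colour every k-subset Y of [N] by its pattern: the set of ranks i < k such that the edge
  between the i-th smallest element of Y and Y has colour True. Ramsey's theorem with 2^k
  colours gives a large set H whose k-subsets all have the same pattern G, and for k = 2b
  some b ranks P agree on membership in G. Place the left vertices x of B_{a,b} at widely
  spaced anchor positions in H and realise each b-set X as a k-subset Y of H that meets the
  anchors exactly in X, with the anchors of X at the ranks P; the k - b remaining elements
  of Y are fillers next to the anchors. Then x is in X iff the anchor of x is in Y, so the
  copy is induced, and each of its edges has the colour that G assigns to a rank in P.
*)

theory Submission
  imports Defs "HOL-Library.Ramsey"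
begin

definition rank_in :: "'a::linorder set \<Rightarrow> 'a \<Rightarrow> nat" where
  "rank_in Y y = card {z \<in> Y. z < y}"

lemma rank_in_less_card:
  assumes "finite Y" "y \<in> Y"
  shows "rank_in Y y < card Y"
  unfolding rank_in_def using assms by (intro psubset_card_mono) auto

lemma strict_mono_on_rank_in:
  assumes "finite Y"
  shows "strict_mono_on Y (rank_in Y)"
proof (rule strict_mono_onI)
  fix y y' assume "y \<in> Y" "y' \<in> Y" "y < y'"
  then have "{z \<in> Y. z < y} \<subset> {z \<in> Y. z < y'}" by auto
  then show "rank_in Y y < rank_in Y y'"
    unfolding rank_in_def using assms by (intro psubset_card_mono) auto
qed

lemma rank_in_image:
  fixes f :: "'a::linorder \<Rightarrow> 'b::linorder"
  assumes f: "strict_mono_on A f" and "Y \<subseteq> A" "y \<in> Y"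
  shows "rank_in (f ` Y) (f y) = rank_in Y y"
proof -
  have "{z \<in> f ` Y. z < f y} = f ` {z \<in> Y. z < y}"
    using assms strict_mono_on_less[OF f] by blast
  moreover have "inj_on f {z \<in> Y. z < y}"
    by (rule inj_on_subset[OF strict_mono_on_imp_inj_on[OF f]]) (use assms(2) in auto)
  ultimately show ?thesis
    unfolding rank_in_def by (simp add: card_image)
qed

lemma rank_in_lessThan:
  assumes "i < n"
  shows "rank_in {..<n} i = i"
proof -
  have "{z \<in> {..<n}. z < i} = {..<i}" using assms by auto
  then show ?thesis unfolding rank_in_def by simp
qed

lemma ex_strict_mono_on_onto:
  fixes P J :: "nat set"
  assumes "finite P" "finite J" "card P = card J"
  obtains \<tau> where "strict_mono_on P \<tau>" "\<tau> ` P = J"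
proof
  let ?\<tau> = "enumerate J \<circ> rank_in P"
  show mono: "strict_mono_on P ?\<tau>"
  proof (rule strict_mono_onI)
    fix p q assume "p \<in> P" "q \<in> P" "p < q"
    then show "?\<tau> p < ?\<tau> q"
      using strict_mono_on_rank_in[OF assms(1)] rank_in_less_card[OF assms(1)] assms
      by (auto intro: finite_enumerate_mono simp: strict_mono_on_def)
  qed
  have "?\<tau> ` P \<subseteq> J"
    using rank_in_less_card[OF assms(1)] assms by (auto intro: finite_enumerate_in_set)
  moreover have "card (?\<tau> ` P) = card J"
    using card_image[OF strict_mono_on_imp_inj_on[OF mono]] assms(3) by simp
  ultimately show "?\<tau> ` P = J"
    using card_subset_eq[OF assms(2)] by blast
qed

definition pattern :: "(bvert set \<Rightarrow> bool) \<Rightarrow> nat set \<Rightarrow> nat set" where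
  "pattern c Y = rank_in Y ` {y \<in> Y. c {Inl y, Inr Y}}"

lemma pattern_subset: "finite Y \<Longrightarrow> pattern c Y \<subseteq> {..<card Y}"
  unfolding pattern_def using rank_in_less_card by blast

lemma rank_in_mem_pattern_iff:
  assumes "finite Y" "y \<in> Y"
  shows "rank_in Y y \<in> pattern c Y \<longleftrightarrow> c {Inl y, Inr Y}"
  using strict_mono_on_imp_inj_on[OF strict_mono_on_rank_in[OF assms(1)]] assms(2)
  unfolding pattern_def by (auto simp: inj_on_image_mem_iff)

lemma ramsey_pattern:
  fixes m k :: nat
  shows "\<exists>N. \<forall>c. \<exists>e G. strict_mono_on {..<m} e \<and> e ` {..<m} \<subseteq> {1..N} \<and>
     (\<forall>Y \<subseteq> {..<m}. card Y = k \<longrightarrow> pattern c (e ` Y) = G)"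
proof -
  obtain N :: nat where N: "partn_lst {..<N} (replicate (2^k) m) k"
    using ramsey_full by blast
  obtain h :: "nat set \<Rightarrow> nat" where h: "bij_betw h (Pow {..<k}) {..<2^k}"
    using ex_bij_betw_finite_nat[of "Pow {..<k}"] by (auto simp: card_Pow atLeast0LessThan)
  have "\<exists>e G. strict_mono_on {..<m} e \<and> e ` {..<m} \<subseteq> {1..N} \<and>
     (\<forall>Y \<subseteq> {..<m}. card Y = k \<longrightarrow> pattern c (e ` Y) = G)" for c
  proof -
    define f where "f Z = h (pattern c (Suc ` Z))" for Z
    have pattern_Pow: "pattern c (Suc ` Z) \<in> Pow {..<k}" if "Z \<in> nsets {..<N} k" for Z
      using pattern_subset[of "Suc ` Z" c] that by (auto simp: nsets_def card_image)
    then have f: "f \<in> nsets {..<N} k \<rightarrow> {..<2^k}"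
      using h unfolding f_def bij_betw_def by auto
    obtain i H where "i < 2^k" "H \<in> nsets {..<N} (replicate (2^k) m ! i)"
      and hom: "f ` nsets H k \<subseteq> {i}"
      using partn_lstE[OF N f length_replicate] by auto
    then have H: "H \<subseteq> {..<N}" "finite H" "card H = m"
      by (simp_all add: nsets_def)
    obtain e where e: "bij_betw e {..<m} H" "strict_mono_on {..<m} e"
      using ex_bij_betw_strict_mono_card[OF H(2)] unfolding H(3) by blast
    have "pattern c ((Suc \<circ> e) ` Y) = inv_into (Pow {..<k}) h i"
      if "Y \<subseteq> {..<m}" "card Y = k" for Y
    proof -
      have "inj_on e Y" using inj_on_subset[OF bij_betw_imp_inj_on[OF e(1)] that(1)] .
      then have eY: "e ` Y \<in> nsets H k"
        using that finite_subset[OF that(1)] bij_betw_imp_surj_on[OF e(1)]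
        by (auto simp: nsets_def card_image)
      then have "h (pattern c (Suc ` e ` Y)) = i"
        using hom unfolding f_def by blast
      moreover have "pattern c (Suc ` e ` Y) \<in> Pow {..<k}"
        using pattern_Pow eY H(1) nsets_mono by blast
      ultimately show ?thesis
        using h by (auto simp: image_comp bij_betw_def intro: inv_into_f_f[symmetric])
    qed
    moreover have "strict_mono_on {..<m} (Suc \<circ> e)"
      using e(2) by (auto simp: strict_mono_on_def)
    moreover have "(Suc \<circ> e) ` {..<m} \<subseteq> {1..N}"
      using e(1) H(1) by (auto simp: bij_betw_def)
    ultimately show ?thesis by blast
  qed
  then show ?thesis by blast
qed

lemma obtain_constant_subset:
  fixes Q :: "'a \<Rightarrow> bool"
  assumes "finite A" "2 * b \<le> card A"
  obtains P col where "P \<subseteq> A" "card P = b" "\<forall>i\<in>P. Q i = col"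
proof (cases "b \<le> card {i \<in> A. Q i}")
  case True
  then obtain P where "P \<subseteq> {i \<in> A. Q i}" "card P = b"
    by (meson obtain_subset_with_card_n)
  then show ?thesis using that[of P True] by auto
next
  case False
  have "card {i \<in> A. Q i} + card {i \<in> A. \<not> Q i} = card A"
    using assms(1) by (subst card_Un_disjoint[symmetric]) (auto intro: arg_cong[where f = card])
  then have "b \<le> card {i \<in> A. \<not> Q i}"
    using False assms(2) by linarith
  then obtain P where "P \<subseteq> {i \<in> A. \<not> Q i}" "card P = b"
    by (meson obtain_subset_with_card_n)
  then show ?thesis using that[of P False] by auto
qed

definition anchor :: "nat \<Rightarrow> nat \<Rightarrow> nat" where
  "anchor K j = (2*K+1) * j + K"

lemma anchor_gap: "x < y \<Longrightarrow> anchor K x + 2*K < anchor K y"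
proof -
  assume "x < y"
  then have "(2*K+1) * (x+1) \<le> (2*K+1) * y" by (intro mult_le_mono2) simp
  then show ?thesis by (simp add: anchor_def algebra_simps)
qed

lemma anchor_add_eq_iff:
  assumes "d \<le> K" "d' \<le> K"
  shows "anchor K x + d = anchor K y + d' \<longleftrightarrow> x = y \<and> d = d'"
  using anchor_gap[of x y K] anchor_gap[of y x K] assms by (cases x y rule: linorder_cases) auto

lemma inj_anchor: "inj (anchor K)"
  using anchor_add_eq_iff[of 0 K 0] by (simp add: inj_def)

lemma anchor_add_less: "x < a \<Longrightarrow> d \<le> K \<Longrightarrow> anchor K x + d < (2*K+1) * a"
  using anchor_gap[of x a K] by (simp add: anchor_def algebra_simps)

text \<open>The default \<^term>\<open>Min P\<close> for \<open>i\<close> below all of \<open>P\<close> puts the fillers of rank less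
  than \<open>Min P\<close> just below the first anchor.\<close>

definition floor_in :: "nat set \<Rightarrow> nat \<Rightarrow> nat" where
  "floor_in P i = (if \<exists>p\<in>P. p \<le> i then Max {p \<in> P. p \<le> i} else Min P)"

lemma floor_in_mem: "finite P \<Longrightarrow> P \<noteq> {} \<Longrightarrow> floor_in P i \<in> P"
  unfolding floor_in_def using Max_in[of "{p \<in> P. p \<le> i}"] by auto

lemma floor_in_eq: "finite P \<Longrightarrow> p \<in> P \<Longrightarrow> floor_in P p = p"
  unfolding floor_in_def by (auto intro: Max_eqI)

lemma floor_in_mono:
  assumes "finite P" "i \<le> i'"
  shows "floor_in P i \<le> floor_in P i'"
proof (cases "\<exists>p\<in>P. p \<le> i")
  case True
  then have "{p \<in> P. p \<le> i} \<subseteq> {p \<in> P. p \<le> i'}" "{p \<in> P. p \<le> i} \<noteq> {}"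
    using assms(2) by auto
  moreover have "\<exists>p\<in>P. p \<le> i'"
    using True assms(2) le_trans by blast
  ultimately show ?thesis
    using True Max_mono[of "{p \<in> P. p \<le> i}" "{p \<in> P. p \<le> i'}"] assms(1)
    by (simp add: floor_in_def)
next
  case False
  show ?thesis
  proof (cases "P = {}")
    case True
    then show ?thesis by (simp add: floor_in_def)
  next
    case nonempty: False
    have "Min P \<le> floor_in P i'"
      by (rule Min_le[OF assms(1) floor_in_mem[OF assms(1) nonempty]])
    then show ?thesis using False by (simp add: floor_in_def)
  qed
qed

text \<open>Rank \<open>i\<close> goes to offset \<open>i - floor_in P i\<close> (negative below \<open>Min P\<close>) from the anchor
  of \<open>\<tau> (floor_in P i)\<close>. Offsets have absolute value below \<open>K\<close>, so a filler never hits an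
  anchor, and since \<open>floor_in P i < K \<le> anchor K _\<close> the truncated subtraction is exact.\<close>

definition template_map :: "nat \<Rightarrow> nat set \<Rightarrow> (nat \<Rightarrow> nat) \<Rightarrow> nat \<Rightarrow> nat" where
  "template_map K P \<tau> i = anchor K (\<tau> (floor_in P i)) + i - floor_in P i"

lemma floor_in_bounds:
  assumes "P \<subseteq> {..<K}" "P \<noteq> {}"
  shows "floor_in P i \<in> P" "floor_in P i < K" "floor_in P i \<le> anchor K (\<tau> (floor_in P i))"
proof -
  show "floor_in P i \<in> P" using floor_in_mem[OF finite_subset[OF assms(1)]] assms(2) by simp
  then show "floor_in P i < K" using assms(1) by blast
  then show "floor_in P i \<le> anchor K (\<tau> (floor_in P i))" by (simp add: anchor_def)
qed

lemma strict_mono_on_template_map: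
  assumes P: "P \<subseteq> {..<K}" "P \<noteq> {}" and \<tau>: "strict_mono_on P \<tau>"
  shows "strict_mono_on {..<K} (template_map K P \<tau>)"
proof (rule strict_mono_onI)
  fix i i' assume ii: "i \<in> {..<K}" "i' \<in> {..<K}" "i < i'"
  let ?M = "floor_in P"
  have "finite P" using finite_subset[OF P(1)] by simp
  then have "?M i \<le> ?M i'" using floor_in_mono ii(3) by simp
  then consider "?M i = ?M i'" | "?M i < ?M i'" by linarith
  then show "template_map K P \<tau> i < template_map K P \<tau> i'"
  proof cases
    case 1
    then show ?thesis
      using ii(3) floor_in_bounds(3)[OF P, of i \<tau>] by (simp add: template_map_def)
  next
    case 2
    then have "anchor K (\<tau> (?M i)) + 2*K < anchor K (\<tau> (?M i'))"
      using \<tau> floor_in_bounds(1)[OF P] by (intro anchor_gap) (simp add: strict_mono_on_less)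
    then show ?thesis
      using ii floor_in_bounds(2)[OF P, of i] floor_in_bounds(2)[OF P, of i']
      by (simp add: template_map_def)
  qed
qed

lemma template_map_less:
  assumes P: "P \<subseteq> {..<K}" "P \<noteq> {}" and "\<tau> ` P \<subseteq> {..<a}" "i < K"
  shows "template_map K P \<tau> i < (2*K+1) * a"
proof -
  have "anchor K (\<tau> (floor_in P i)) + (i - floor_in P i) < (2*K+1) * a"
    using assms floor_in_bounds(1)[OF P] by (intro anchor_add_less) auto
  then show ?thesis
    using floor_in_bounds(3)[OF P, of i \<tau>] by (simp add: template_map_def)
qed

lemma template_map_eq_anchor:
  assumes "P \<subseteq> {..<K}" "p \<in> P"
  shows "template_map K P \<tau> p = anchor K (\<tau> p)"
proof -
  have "finite P" using finite_subset[OF assms(1)] by simp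
  then show ?thesis using floor_in_eq assms(2) by (simp add: template_map_def)
qed

lemma template_map_eq_anchor_imp_mem:
  assumes P: "P \<subseteq> {..<K}" "P \<noteq> {}" and "i < K" "template_map K P \<tau> i = anchor K j"
  shows "i \<in> P"
proof -
  have "anchor K (\<tau> (floor_in P i)) + i = anchor K j + floor_in P i"
    using assms(4) floor_in_bounds(3)[OF P, of i \<tau>] by (simp add: template_map_def)
  then have "i = floor_in P i"
    using anchor_add_eq_iff assms(3) floor_in_bounds(2)[OF P, of i] by simp
  then show ?thesis using floor_in_bounds(1)[OF P, of i] by simp
qed

lemma ex_template:
  assumes P: "P \<subseteq> {..<K}" "P \<noteq> {}" and J: "J \<subseteq> {..<a}" and card: "card P = card J"
  obtains Y where "Y \<subseteq> {..<(2*K+1) * a}" "card Y = K"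
    "\<And>j. anchor K j \<in> Y \<longleftrightarrow> j \<in> J" "\<And>j. j \<in> J \<Longrightarrow> rank_in Y (anchor K j) \<in> P"
proof -
  obtain \<tau> where \<tau>: "strict_mono_on P \<tau>" "\<tau> ` P = J"
    using ex_strict_mono_on_onto[OF finite_subset[OF P(1)] finite_subset[OF J] card] by blast
  define \<iota> where "\<iota> = template_map K P \<tau>"
  have \<iota>_mono: "strict_mono_on {..<K} \<iota>"
    unfolding \<iota>_def using P \<tau>(1) by (rule strict_mono_on_template_map)
  have \<iota>_anchor: "\<iota> p = anchor K (\<tau> p)" if "p \<in> P" for p
    unfolding \<iota>_def using P(1) that by (rule template_map_eq_anchor)
  have \<iota>_hit: "i \<in> P" if "i < K" "\<iota> i = anchor K j" for i j
    using template_map_eq_anchor_imp_mem[OF P that(1)] that(2) by (simp add: \<iota>_def)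
  show ?thesis
  proof
    show "\<iota> ` {..<K} \<subseteq> {..<(2*K+1) * a}"
      using template_map_less[OF P] \<tau>(2) J by (auto simp: \<iota>_def)
    show "card (\<iota> ` {..<K}) = K"
      using card_image[OF strict_mono_on_imp_inj_on[OF \<iota>_mono]] by simp
    show "anchor K j \<in> \<iota> ` {..<K} \<longleftrightarrow> j \<in> J" for j
    proof
      assume "anchor K j \<in> \<iota> ` {..<K}"
      then obtain i where i: "i < K" "\<iota> i = anchor K j" by auto
      then have "i \<in> P" using \<iota>_hit by blast
      moreover from this have "anchor K (\<tau> i) = anchor K j" using \<iota>_anchor i(2) by simp
      ultimately show "j \<in> J" using \<tau>(2) inj_anchor by (auto dest: injD)
    next
      assume "j \<in> J"
      then obtain p where "p \<in> P" "j = \<tau> p" using \<tau>(2) by auto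
      then show "anchor K j \<in> \<iota> ` {..<K}" using \<iota>_anchor P(1) by force
    qed
    show "rank_in (\<iota> ` {..<K}) (anchor K j) \<in> P" if "j \<in> J" for j
    proof -
      obtain p where p: "p \<in> P" "j = \<tau> p" using \<tau>(2) \<open>j \<in> J\<close> by auto
      then have "p < K" using P(1) by auto
      then have "rank_in (\<iota> ` {..<K}) (\<iota> p) = p"
        using rank_in_image[OF \<iota>_mono] rank_in_lessThan by simp
      then show ?thesis using p \<iota>_anchor by simp
    qed
  qed
qed

lemma Inl_Inr_mem_B_edges_iff:
  "{Inl x, Inr X} \<in> B_edges n k \<longleftrightarrow> x \<in> {1..n} \<and> X \<in> ksubsets n k \<and> x \<in> X"
  unfolding B_edges_def by (auto simp: doubleton_eq_iff)

lemma Inr_Inl_mem_B_edges_iff: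
  "{Inr X, Inl x} \<in> B_edges n k \<longleftrightarrow> x \<in> {1..n} \<and> X \<in> ksubsets n k \<and> x \<in> X"
  by (simp add: insert_commute Inl_Inr_mem_B_edges_iff)

lemma Inl_Inl_notin_B_edges: "{Inl x, Inl y} \<notin> B_edges n k"
  unfolding B_edges_def by (auto simp: doubleton_eq_iff)

lemma Inr_Inr_notin_B_edges: "{Inr X, Inr Y} \<notin> B_edges n k"
  unfolding B_edges_def by (auto simp: doubleton_eq_iff)

lemma B_edges_zero: "B_edges n 0 = {}"
proof -
  have "X = {}" if "X \<in> ksubsets n 0" for X
    using that finite_subset[of X "{1..n}"] by (simp add: ksubsets_def)
  then show ?thesis unfolding B_edges_def by blast
qed

lemma B_verts_eq_Plus: "B_verts n k = {1..n} <+> ksubsets n k"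
  by (simp add: B_verts_def Plus_def)

lemma induced_iso_map_sum:
  assumes fL: "inj_on fL {1..a}" "fL ` {1..a} \<subseteq> {1..n}"
    and fR: "inj_on fR (ksubsets a b)" "fR ` ksubsets a b \<subseteq> ksubsets n k"
    and mem: "\<And>x X. x \<in> {1..a} \<Longrightarrow> X \<in> ksubsets a b \<Longrightarrow> fL x \<in> fR X \<longleftrightarrow> x \<in> X"
  shows "induced_iso n k (map_sum fL fR ` B_verts a b) a b"
proof -
  let ?F = "map_sum fL fR"
  have inj: "inj_on ?F (B_verts a b)"
  proof (rule inj_onI)
    fix u v assume "u \<in> B_verts a b" "v \<in> B_verts a b" "?F u = ?F v"
    then show "u = v"
      unfolding B_verts_eq_Plus by (elim PlusE) (auto simp: inj_on_eq_iff[OF fL(1)] inj_on_eq_iff[OF fR(1)])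
  qed
  have fL_mem: "fL x \<in> {1..n}" if "x \<in> {1..a}" for x using fL(2) that by blast
  have fR_mem: "fR X \<in> ksubsets n k" if "X \<in> ksubsets a b" for X using fR(2) that by blast
  have edges: "{?F u, ?F v} \<in> B_edges n k \<longleftrightarrow> {u, v} \<in> B_edges a b"
    if "u \<in> B_verts a b" "v \<in> B_verts a b" for u v
    using that fL_mem fR_mem unfolding B_verts_eq_Plus
    by (elim PlusE) (auto simp: Inl_Inr_mem_B_edges_iff Inr_Inl_mem_B_edges_iff
        Inl_Inl_notin_B_edges Inr_Inr_notin_B_edges mem)
  show ?thesis
    unfolding induced_iso_def
  proof (intro conjI exI)
    show "?F ` B_verts a b \<subseteq> B_verts n k"
      using fL(2) fR(2) by (auto simp: B_verts_def)
    show "bij_betw (inv_into (B_verts a b) ?F) (?F ` B_verts a b) (B_verts a b)"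
      using inj by (simp add: bij_betw_imageI bij_betw_inv_into)
    show "\<forall>u\<in>?F ` B_verts a b. \<forall>v\<in>?F ` B_verts a b.
      {u, v} \<in> B_edges n k \<longleftrightarrow> {inv_into (B_verts a b) ?F u, inv_into (B_verts a b) ?F v} \<in> B_edges a b"
      using edges inj by (auto simp: inv_into_f_f)
  qed
qed

lemma B_edge_in_map_sum_image:
  assumes mem: "\<And>x X. x \<in> {1..a} \<Longrightarrow> X \<in> ksubsets a b \<Longrightarrow> fL x \<in> fR X \<longleftrightarrow> x \<in> X"
    and E: "E \<in> B_edges n k" "E \<subseteq> map_sum fL fR ` B_verts a b"
  obtains x X where "X \<in> ksubsets a b" "x \<in> X" "E = {Inl (fL x), Inr (fR X)}"
proof -
  obtain y Z where yZ: "E = {Inl y, Inr Z}" "y \<in> Z"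
    using E(1) unfolding B_edges_def by blast
  then obtain x X where "x \<in> {1..a}" "X \<in> ksubsets a b" "y = fL x" "Z = fR X"
    using E(2) by (auto simp: B_verts_def)
  then show ?thesis using that mem yZ by blast
qed

lemma monochromatic_induced_copy:
  fixes e :: "nat \<Rightarrow> nat" and a k :: nat
  defines "m \<equiv> (2*k+1) * Suc a" \<comment> \<open>room for the anchors of the left vertices \<open>1..a\<close>\<close>
  assumes e: "strict_mono_on {..<m} e" "e ` {..<m} \<subseteq> {1..N}"
    and G: "\<And>Y. Y \<subseteq> {..<m} \<Longrightarrow> card Y = k \<Longrightarrow> pattern c (e ` Y) = G"
    and P: "P \<subseteq> {..<k}" "P \<noteq> {}" "card P = b" "\<forall>i\<in>P. i \<in> G \<longleftrightarrow> col"
  shows "\<exists>V'. induced_iso N k V' a b \<and> (\<forall>E\<in>B_edges N k. E \<subseteq> V' \<longrightarrow> c E = col)"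
proof -
  have "\<forall>X\<in>ksubsets a b. \<exists>Y. Y \<subseteq> {..<m} \<and> card Y = k \<and> (\<forall>j. anchor k j \<in> Y \<longleftrightarrow> j \<in> X) \<and>
      (\<forall>j\<in>X. rank_in Y (anchor k j) \<in> P)"
  proof
    fix X assume "X \<in> ksubsets a b"
    then have "X \<subseteq> {..<Suc a}" "card P = card X"
      using P(3) by (auto simp: ksubsets_def)
    then obtain Y where "Y \<subseteq> {..<m}" "card Y = k"
      "\<And>j. anchor k j \<in> Y \<longleftrightarrow> j \<in> X" "\<And>j. j \<in> X \<Longrightarrow> rank_in Y (anchor k j) \<in> P"
      using ex_template[OF P(1,2)] unfolding m_def by blast
    then show "\<exists>Y. Y \<subseteq> {..<m} \<and> card Y = k \<and>
      (\<forall>j. anchor k j \<in> Y \<longleftrightarrow> j \<in> X) \<and> (\<forall>j\<in>X. rank_in Y (anchor k j) \<in> P)"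
      by blast
  qed
  then obtain Y where Y: "\<forall>X\<in>ksubsets a b. Y X \<subseteq> {..<m} \<and> card (Y X) = k \<and>
      (\<forall>j. anchor k j \<in> Y X \<longleftrightarrow> j \<in> X) \<and> (\<forall>j\<in>X. rank_in (Y X) (anchor k j) \<in> P)"
    by (rule bchoice[THEN exE])
  define fL where "fL x = e (anchor k x)" for x
  define fR where "fR X = e ` Y X" for X
  have inj_e: "inj_on e {..<m}" using strict_mono_on_imp_inj_on[OF e(1)] .
  have anchor_m: "anchor k x \<in> {..<m}" if "x \<in> {1..a}" for x
    using anchor_add_less[of x "Suc a" 0 k] that by (simp add: m_def)
  have mem: "fL x \<in> fR X \<longleftrightarrow> x \<in> X" if "x \<in> {1..a}" "X \<in> ksubsets a b" for x X
    using inj_on_image_mem_iff[OF inj_e anchor_m[OF that(1)]] Y that(2) by (simp add: fL_def fR_def)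
  have "induced_iso N k (map_sum fL fR ` B_verts a b) a b"
  proof (rule induced_iso_map_sum[OF _ _ _ _ mem])
    show "inj_on fL {1..a}"
      using inj_on_eq_iff[OF inj_e] anchor_m inj_anchor by (auto simp: inj_on_def fL_def dest: injD)
    show "fL ` {1..a} \<subseteq> {1..N}" using e(2) anchor_m by (auto simp: fL_def)
    have recover: "X = {x \<in> {1..a}. fL x \<in> fR X}" if "X \<in> ksubsets a b" for X
    proof -
      have "X \<subseteq> {1..a}" using that by (simp add: ksubsets_def)
      then show ?thesis using mem[OF _ that] by blast
    qed
    show "inj_on fR (ksubsets a b)"
    proof (rule inj_onI)
      fix X X' assume "X \<in> ksubsets a b" "X' \<in> ksubsets a b" "fR X = fR X'"
      then show "X = X'" using recover[of X] recover[of X'] by simp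
    qed
    show "fR ` ksubsets a b \<subseteq> ksubsets N k"
    proof clarify
      fix X assume X: "X \<in> ksubsets a b"
      have YX: "Y X \<subseteq> {..<m}" "card (Y X) = k" using Y X by blast+
      have "card (fR X) = k"
        using card_image[OF inj_on_subset[OF inj_e YX(1)]] YX(2) by (simp add: fR_def)
      moreover have "fR X \<subseteq> {1..N}" using image_mono[OF YX(1), of e] e(2) by (simp add: fR_def)
      ultimately show "fR X \<in> ksubsets N k" by (simp add: ksubsets_def)
    qed
  qed
  moreover have "c {Inl (fL x), Inr (fR X)} = col" if X: "X \<in> ksubsets a b" "x \<in> X" for x X
  proof -
    have YX: "Y X \<subseteq> {..<m}" "card (Y X) = k" "anchor k x \<in> Y X" "rank_in (Y X) (anchor k x) \<in> P"
      using Y X by auto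
    have "rank_in (fR X) (fL x) \<in> P"
      unfolding fR_def fL_def using rank_in_image[OF e(1) YX(1,3)] YX(4) by simp
    moreover have "pattern c (fR X) = G" using G[OF YX(1,2)] by (simp add: fR_def)
    moreover have "finite (fR X)" using finite_subset[OF YX(1)] by (simp add: fR_def)
    moreover have "fL x \<in> fR X" using YX(3) by (simp add: fR_def fL_def)
    ultimately show ?thesis
      using rank_in_mem_pattern_iff[of "fR X" "fL x" c] P(4) by blast
  qed
  moreover have "c E = col" if E: "E \<in> B_edges N k" "E \<subseteq> map_sum fL fR ` B_verts a b" for E
  proof -
    obtain x X where "X \<in> ksubsets a b" "x \<in> X" "E = {Inl (fL x), Inr (fR X)}"
      by (rule B_edge_in_map_sum_image[OF mem E])
    with calculation(2) show ?thesis by blast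
  qed
  ultimately show ?thesis by blast
qed

lemma monochromatic_induced_copy_zero:
  fixes c :: "bvert set \<Rightarrow> bool"
  shows "\<exists>V'. induced_iso a 0 V' a 0 \<and> (\<exists>col. \<forall>E\<in>B_edges a 0. E \<subseteq> V' \<longrightarrow> c E = col)"
proof (intro exI conjI)
  show "induced_iso a 0 (map_sum id id ` B_verts a 0) a 0"
    by (rule induced_iso_map_sum) auto
  show "\<forall>E\<in>B_edges a 0. E \<subseteq> map_sum id id ` B_verts a 0 \<longrightarrow> c E = True"
    by (simp add: B_edges_zero)
qed

lemma ex_monochromatic_induced_copy:
  assumes "0 < b"
  shows "\<exists>N. 2*b \<le> N \<and> (\<forall>c :: bvert set \<Rightarrow> bool. \<exists>V'. induced_iso N (2*b) V' a b \<and>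
           (\<exists>col. \<forall>E\<in>B_edges N (2*b). E \<subseteq> V' \<longrightarrow> c E = col))"
proof -
  define k where "k = 2 * b"
  define m where "m = (2*k+1) * Suc a"
  obtain N where N: "\<forall>c. \<exists>e G. strict_mono_on {..<m} e \<and> e ` {..<m} \<subseteq> {1..N} \<and>
      (\<forall>Y \<subseteq> {..<m}. card Y = k \<longrightarrow> pattern c (e ` Y) = G)"
    using ramsey_pattern[of m k] by blast
  have "k \<le> N"
  proof -
    obtain e where "strict_mono_on {..<m} e" "e ` {..<m} \<subseteq> {1..N}"
      using N[rule_format, of "\<lambda>_. True"] by blast
    then have "card {..<m} \<le> card {1..N}"
      by (intro card_inj_on_le[OF strict_mono_on_imp_inj_on]) auto
    then show ?thesis by (simp add: m_def)
  qed
  moreover have "\<exists>V'. induced_iso N k V' a b \<and> (\<exists>col. \<forall>E\<in>B_edges N k. E \<subseteq> V' \<longrightarrow> c E = col)"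
    for c :: "bvert set \<Rightarrow> bool"
  proof -
    obtain e G where e: "strict_mono_on {..<m} e" "e ` {..<m} \<subseteq> {1..N}"
      and G: "\<forall>Y \<subseteq> {..<m}. card Y = k \<longrightarrow> pattern c (e ` Y) = G"
      using N by blast
    obtain P col where P: "P \<subseteq> {..<k}" "card P = b" "\<forall>i\<in>P. i \<in> G \<longleftrightarrow> col"
      by (rule obtain_constant_subset[of "{..<k}" b "\<lambda>i. i \<in> G"]) (simp_all add: k_def)
    have "P \<noteq> {}" using P(2) assms by auto
    moreover have "\<And>Y. Y \<subseteq> {..<(2*k+1) * Suc a} \<Longrightarrow> card Y = k \<Longrightarrow> pattern c (e ` Y) = G"
      using G unfolding m_def by blast
    ultimately obtain V' where "induced_iso N k V' a b" "\<forall>E\<in>B_edges N k. E \<subseteq> V' \<longrightarrow> c E = col"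
      using monochromatic_induced_copy[OF e[unfolded m_def] _ P(1) _ P(2,3)] by blast
    then show ?thesis by (intro exI[of _ V'] exI[of _ col] conjI)
  qed
  ultimately show ?thesis unfolding k_def by blast
qed

theorem mainTheorem2:
  fixes a b :: nat
  assumes "b \<le> a"
  shows "\<exists>n k. k \<le> n \<and>
           (\<forall>c :: bvert set \<Rightarrow> bool.
              \<exists>V'. induced_iso n k V' a b \<and>
                   (\<exists>col. \<forall>e \<in> B_edges n k. e \<subseteq> V' \<longrightarrow> c e = col))"
proof (cases "b = 0")
  case True
  then show ?thesis
    using monochromatic_induced_copy_zero[of a]
    by (intro exI[of _ a] exI[of _ "0::nat"] conjI allI) simp_all
next
  case False
  then obtain N where "2*b \<le> N" "\<forall>c :: bvert set \<Rightarrow> bool. \<exists>V'. induced_iso N (2*b) V' a b \<and>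
      (\<exists>col. \<forall>E\<in>B_edges N (2*b). E \<subseteq> V' \<longrightarrow> c E = col)"
    using ex_monochromatic_induced_copy[of b a] by blast
  then show ?thesis by (intro exI[of _ N] exI[of _ "2*b"] conjI)
qed

end
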